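(* Let $m,n$ be positive integers, let $\mathbf{0}=(0,\dots,0)$ and let $\mathbf{b}$ be any vertex of $\mathcal{CSR}(m,n)$. Then the distance between $\mathbf{0}$ and $\mathbf{b}$ in $\mathcal{CSR}(m,n)$ is $d(\mathbf{0},\mathbf{b})=m-\tau(\mathbf{b})$.
   Context: For positive integers $m,n$, the cyclic simplicial rook graph $\mathcal{CSR}(m,n)$ is the graph whose vertices are the vectors $(a_1,\dots,a_m)\in\mathbb{Z}_n^m$ with $a_1+\cdots+a_m\equiv 0 \pmod n$, two vertices being adjacent if and only if their vectors differ in exactly two coordinates. The distance $d(u,v)$ is the number of edges of a shortest path between $u$ and $v$. For a vertex $\mathbf{b}=(b_1,\dots,b_m)$, a zero partitioning of size $t$ for $\mathbf{b}$ is a partition of $[m]=\{1,\dots,m\}$ into $t$ parts $P_1,\dots,P_t$ such that $\sum_{j\in P_i} b_j\equiv 0\pmod n$ for every $i\in[t]$; the zero partitioning number $\tau(\mathbf{b})$ is the maximum $t$ for which a zero partitioning of size $t$ for $\mathbf{b}$ exists. *)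

theory Defs
  imports Main "HOL-Library.Disjoint_Sets"
begin

text \<open>Vertices of CSR(m,n): vectors (a_1,...,a_m) in Z_n^m with coordinate sum 0 mod n.
  A vector is represented as a function nat => int with a i in {0..<n} for i in {1..m}
  (canonical residues) and a i = 0 outside {1..m}.\<close>
definition csr_vertex :: "nat \<Rightarrow> nat \<Rightarrow> (nat \<Rightarrow> int) \<Rightarrow> bool" where
  "csr_vertex m n a \<longleftrightarrow>
     (\<forall>i\<in>{1..m}. 0 \<le> a i \<and> a i < int n) \<and>
     (\<forall>i. i \<notin> {1..m} \<longrightarrow> a i = 0) \<and>
     (\<Sum>i\<in>{1..m}. a i) mod int n = 0"

definition csr_adj :: "nat \<Rightarrow> nat \<Rightarrow> (nat \<Rightarrow> int) \<Rightarrow> (nat \<Rightarrow> int) \<Rightarrow> bool" where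
  "csr_adj m n a b \<longleftrightarrow> csr_vertex m n a \<and> csr_vertex m n b \<and>
     card {i\<in>{1..m}. a i \<noteq> b i} = 2"

definition csr_walk :: "nat \<Rightarrow> nat \<Rightarrow> (nat \<Rightarrow> (nat \<Rightarrow> int)) \<Rightarrow> nat \<Rightarrow> bool" where
  "csr_walk m n p k \<longleftrightarrow> csr_vertex m n (p 0) \<and> (\<forall>j<k. csr_adj m n (p j) (p (Suc j)))"

definition csr_connected_by :: "nat \<Rightarrow> nat \<Rightarrow> (nat \<Rightarrow> int) \<Rightarrow> (nat \<Rightarrow> int) \<Rightarrow> nat \<Rightarrow> bool" where
  "csr_connected_by m n u v k \<longleftrightarrow> (\<exists>p. csr_walk m n p k \<and> p 0 = u \<and> p k = v)"

definition csr_dist :: "nat \<Rightarrow> nat \<Rightarrow> (nat \<Rightarrow> int) \<Rightarrow> (nat \<Rightarrow> int) \<Rightarrow> nat" where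
  "csr_dist m n u v = (LEAST k. csr_connected_by m n u v k)"

definition zero_partitioning :: "nat \<Rightarrow> nat \<Rightarrow> (nat \<Rightarrow> int) \<Rightarrow> nat set set \<Rightarrow> bool" where
  "zero_partitioning m n b P \<longleftrightarrow> partition_on {1..m} P \<and>
     (\<forall>S\<in>P. (\<Sum>j\<in>S. b j) mod int n = 0)"

definition tau :: "nat \<Rightarrow> nat \<Rightarrow> (nat \<Rightarrow> int) \<Rightarrow> nat" where
  "tau m n b = Max {t. \<exists>P. zero_partitioning m n b P \<and> card P = t}"

end

theory Submission
  imports Defs
begin

text \<open>Along a walk from \<open>0\<close>, each step changes two coordinates \<open>i, i'\<close> by amounts whose
  sum is \<open>0 mod n\<close>; merging the parts of a zero partitioning that contain \<open>i\<close> and \<open>i'\<close>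
  gives a zero partitioning of the next vertex with at most one part fewer. Starting from the
  \<open>m\<close> singletons at \<open>0\<close>, a walk of length \<open>k\<close> thus ends at a vertex with \<open>\<tau> \<ge> m - k\<close>.

  Conversely, let \<open>P\<close> be a zero partitioning of \<open>b \<noteq> 0\<close> and \<open>b\<^sub>i \<noteq> 0\<close> with \<open>i\<close> in the
  part \<open>S\<close>. As \<open>S\<close> has zero sum, it contains some \<open>i' \<noteq> i\<close> with \<open>b\<^sub>i' \<noteq> 0\<close>. Moving the
  value \<open>b\<^sub>i\<close> onto coordinate \<open>i'\<close> gives a neighbour of \<open>b\<close> with smaller support, which has
  the zero partitioning obtained from \<open>P\<close> by splitting \<open>{i}\<close> off \<open>S\<close>. Induction on the
  support yields a walk from \<open>0\<close> to \<open>b\<close> of length at most \<open>m - |P|\<close>.\<close>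

lemma card_partition_on_le:
  assumes "finite A" "partition_on A P"
  shows "card P \<le> card A"
proof -
  have "card S \<ge> 1" if "S \<in> P" for S
  proof -
    have "S \<subseteq> A" using partition_onD1[OF assms(2)] that by blast
    then have "finite S" using assms(1) by (rule finite_subset)
    moreover have "S \<noteq> {}" using partition_onD3[OF assms(2)] that by blast
    ultimately show ?thesis by (simp add: Suc_le_eq card_gt_0_iff)
  qed
  then have "(\<Sum>S\<in>P. 1) \<le> (\<Sum>S\<in>P. card S)" by (rule sum_mono)
  also have "(\<Sum>S\<in>P. card S) = card A"
    using sum.partition[OF assms, of "\<lambda>_. 1 :: nat"] by simp
  finally show ?thesis by simp
qed

lemma partition_on_merge:
  assumes "partition_on A P" "S \<in> P" "S' \<in> P"
  shows "partition_on A (insert (S \<union> S') (P - {S, S'}))"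
proof -
  have disj: "disjoint P" using assms(1) by (rule partition_onD2)
  have "disjnt (S \<union> S') Y" if "Y \<in> P - {S, S'}" for Y
    using disj assms(2,3) that by (auto simp: disjnt_Un1 dest: pairwiseD)
  moreover have "disjoint (P - {S, S'})" using disj by (rule pairwise_subset) blast
  ultimately have "disjoint (insert (S \<union> S') (P - {S, S'}))"
    by (simp add: pairwise_insert disjnt_sym)
  moreover have "\<Union>(insert (S \<union> S') (P - {S, S'})) = A"
    using partition_onD1[OF assms(1)] assms(2,3) by blast
  moreover have "{} \<notin> insert (S \<union> S') (P - {S, S'})"
    using partition_onD3[OF assms(1)] assms(2) by auto
  ultimately show ?thesis by (simp add: partition_on_def)
qed

lemma card_partition_merge:
  assumes "partition_on A P" "finite P" "S \<in> P" "S' \<in> P"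
  shows "card P \<le> Suc (card (insert (S \<union> S') (P - {S, S'})))"
proof (cases "S = S'")
  case True
  then show ?thesis using assms by (simp add: insert_absorb)
next
  case False
  have "S \<union> S' \<notin> P - {S, S'}"
  proof
    assume "S \<union> S' \<in> P - {S, S'}"
    then have "disjnt (S \<union> S') S" using partition_onD2[OF assms(1)] assms(3) by (auto dest: pairwiseD)
    then show False using partition_onD3[OF assms(1)] assms(3) by (auto simp: disjnt_def)
  qed
  then show ?thesis using assms False by (simp add: card_Diff_subset)
qed

lemma partition_on_split_off:
  assumes "partition_on A P" "S \<in> P" "i \<in> S" "S \<noteq> {i}"
  shows "partition_on A (insert {i} (insert (S - {i}) (P - {S})))"
proof -
  have disj: "disjoint P" using assms(1) by (rule partition_onD2)
  have "disjnt S Y" if "Y \<in> P - {S}" for Y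
    using disj assms(2) that by (auto dest: pairwiseD)
  then have "disjnt (S - {i}) Y" "disjnt {i} Y" if "Y \<in> P - {S}" for Y
    using that assms(3) by (auto simp: disjnt_def)
  moreover have "disjoint (P - {S})" using disj by (rule pairwise_subset) blast
  ultimately have "disjoint (insert {i} (insert (S - {i}) (P - {S})))"
    by (auto simp: pairwise_insert disjnt_sym)
  moreover have "\<Union>(insert {i} (insert (S - {i}) (P - {S}))) = A"
    using partition_onD1[OF assms(1)] assms(2,3) by blast
  moreover have "{} \<notin> insert {i} (insert (S - {i}) (P - {S}))"
    using partition_onD3[OF assms(1)] assms(3,4) by auto
  ultimately show ?thesis by (simp add: partition_on_def)
qed

lemma card_partition_split_off:
  assumes "partition_on A P" "finite P" "S \<in> P" "i \<in> S" "S \<noteq> {i}"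
  shows "card (insert {i} (insert (S - {i}) (P - {S}))) = Suc (card P)"
proof -
  have disj: "disjnt Y S" if "Y \<in> P - {S}" for Y
    using partition_onD2[OF assms(1)] assms(3) that by (auto dest: pairwiseD)
  have "S - {i} \<noteq> {}" using assms(4,5) by blast
  then have new1: "S - {i} \<notin> P - {S}" using disj by (force simp: disjnt_def)
  have new2: "{i} \<notin> insert (S - {i}) (P - {S})" using disj assms(4) by (force simp: disjnt_def)
  have "card (P - {S}) = card P - 1" using assms(2,3) by simp
  moreover have "card P > 0" using assms(2,3) card_gt_0_iff by blast
  ultimately show ?thesis using assms(2) new1 new2 by simp
qed

lemma sum_fun_upd:
  fixes f :: "'a \<Rightarrow> 'b :: ab_group_add"
  assumes "finite A" "x \<in> A"
  shows "sum (f(x := y)) A = sum f A - f x + y"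
proof -
  have "sum (f(x := y)) (A - {x}) = sum f (A - {x})" by (rule sum.cong) auto
  then show ?thesis using sum.remove[OF assms, of "f(x := y)"] sum.remove[OF assms, of f]
    by simp
qed

lemma mod_add_ne_self:
  fixes x y n :: int
  assumes "0 \<le> x" "x < n" "\<not> n dvd y"
  shows "(x + y) mod n \<noteq> x"
proof
  assume "(x + y) mod n = x"
  then have "(x + y) mod n = x mod n" using assms by simp
  then have "n dvd (x + y) - x" by (simp only: mod_eq_dvd_iff)
  then show False using assms by simp
qed

lemma exists_other_nonzero:
  fixes b :: "'a \<Rightarrow> int"
  assumes "finite S" "i \<in> S" "n dvd (\<Sum>j\<in>S. b j)" "\<not> n dvd b i"
  shows "\<exists>i'\<in>S. i' \<noteq> i \<and> b i' \<noteq> 0"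
proof (rule ccontr)
  assume "\<not> ?thesis"
  then have "(\<Sum>j\<in>S - {i}. b j) = 0" by (intro sum.neutral) auto
  then have "(\<Sum>j\<in>S. b j) = b i" using sum.remove[OF assms(1,2), of b] by simp
  then show False using assms by simp
qed

lemma zero_partitioning_iff:
  "zero_partitioning m n b P \<longleftrightarrow>
     partition_on {1..m} P \<and> (\<forall>S\<in>P. int n dvd (\<Sum>j\<in>S. b j))"
  by (simp add: zero_partitioning_def dvd_eq_mod_eq_0)

lemma zero_partitioning_card_le:
  "zero_partitioning m n b P \<Longrightarrow> card P \<le> m"
  using card_partition_on_le[of "{1..m}" P] by (simp add: zero_partitioning_def)

lemma zero_partitioning_partD:
  assumes "zero_partitioning m n b P" "S \<in> P"
  shows "S \<subseteq> {1..m}" "finite S" "int n dvd (\<Sum>j\<in>S. b j)"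
proof -
  show sub: "S \<subseteq> {1..m}"
    using assms partition_onD1 unfolding zero_partitioning_def by blast
  show "finite S" using finite_subset[OF sub] by simp
  show "int n dvd (\<Sum>j\<in>S. b j)" using assms by (simp add: zero_partitioning_iff)
qed

lemma zero_partitioning_merge:
  assumes "zero_partitioning m n b P" "S \<in> P" "S' \<in> P"
  shows "zero_partitioning m n b (insert (S \<union> S') (P - {S, S'}))"
proof -
  have "int n dvd (\<Sum>j\<in>S \<union> S'. b j)"
  proof (cases "S = S'")
    case True
    then show ?thesis using zero_partitioning_partD(3)[OF assms(1,2)] by simp
  next
    case False
    then have "S \<inter> S' = {}"
      using assms partition_onD2 disjointD unfolding zero_partitioning_def by metis
    then have "(\<Sum>j\<in>S \<union> S'. b j) = (\<Sum>j\<in>S. b j) + (\<Sum>j\<in>S'. b j)"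
      using zero_partitioning_partD(2)[OF assms(1)] assms(2,3) by (simp add: sum.union_disjoint)
    then show ?thesis using zero_partitioning_partD(3)[OF assms(1)] assms(2,3) by simp
  qed
  moreover have "partition_on {1..m} (insert (S \<union> S') (P - {S, S'}))"
    using assms partition_on_merge unfolding zero_partitioning_def by blast
  ultimately show ?thesis
    using assms(1) by (auto simp: zero_partitioning_iff)
qed

lemma zero_partitioning_change:
  assumes "zero_partitioning m n v P"
    and "\<And>j. j \<in> {1..m} \<Longrightarrow> j \<notin> D \<Longrightarrow> w j = v j"
    and "int n dvd (\<Sum>j\<in>D. w j - v j)"
    and "\<And>T. T \<in> P \<Longrightarrow> D \<subseteq> T \<or> T \<inter> D = {}"
  shows "zero_partitioning m n w P"
  unfolding zero_partitioning_iff
proof (intro conjI ballI)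
  show "partition_on {1..m} P" using assms(1) by (simp add: zero_partitioning_iff)
  fix T assume T: "T \<in> P"
  have "\<forall>j\<in>T - T \<inter> D. w j - v j = 0"
    using zero_partitioning_partD(1)[OF assms(1) T] assms(2) by (simp add: subset_iff)
  then have "(\<Sum>j\<in>T. w j - v j) = (\<Sum>j\<in>T \<inter> D. w j - v j)"
    using zero_partitioning_partD(2)[OF assms(1) T] by (intro sum.mono_neutral_right) auto
  then have "(\<Sum>j\<in>T. w j) = (\<Sum>j\<in>T. v j) + (\<Sum>j\<in>T \<inter> D. w j - v j)"
    by (simp add: sum_subtractf)
  moreover have "int n dvd (\<Sum>j\<in>T. v j)" using zero_partitioning_partD(3)[OF assms(1) T] .
  moreover have "T \<inter> D = D \<or> T \<inter> D = {}" using assms(4)[OF T] by blast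
  ultimately show "int n dvd (\<Sum>j\<in>T. w j)" using assms(3) by auto
qed

lemma csr_vertex_sum_dvd:
  "csr_vertex m n v \<Longrightarrow> int n dvd (\<Sum>j\<in>{1..m}. v j)"
  by (simp add: csr_vertex_def dvd_eq_mod_eq_0)

lemma csr_vertex_diff_sum_dvd:
  assumes "csr_vertex m n v" "csr_vertex m n w"
  shows "int n dvd (\<Sum>j\<in>{j\<in>{1..m}. v j \<noteq> w j}. w j - v j)"
proof -
  have "(\<Sum>j\<in>{j\<in>{1..m}. v j \<noteq> w j}. w j - v j) = (\<Sum>j\<in>{1..m}. w j - v j)"
    by (rule sum.mono_neutral_left) auto
  also have "\<dots> = (\<Sum>j\<in>{1..m}. w j) - (\<Sum>j\<in>{1..m}. v j)"
    by (simp add: sum_subtractf)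
  finally show ?thesis
    using csr_vertex_sum_dvd[OF assms(1)] csr_vertex_sum_dvd[OF assms(2)] by (simp add: dvd_diff)
qed

lemma zero_partitioning_adj:
  assumes "csr_adj m n v w" "zero_partitioning m n v P"
  shows "\<exists>P'. zero_partitioning m n w P' \<and> card P \<le> Suc (card P')"
proof -
  define D where "D = {j\<in>{1..m}. v j \<noteq> w j}"
  obtain i i' where D: "D = {i, i'}"
    using assms(1) unfolding csr_adj_def D_def[symmetric] card_2_iff by blast
  have part: "partition_on {1..m} P" using assms(2) by (simp add: zero_partitioning_def)
  have "i \<in> {1..m}" "i' \<in> {1..m}" using D unfolding D_def by blast+
  then obtain S S' where S: "S \<in> P" "i \<in> S" and S': "S' \<in> P" "i' \<in> S'"
    using partition_onD1[OF part] by blast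
  define P' where "P' = insert (S \<union> S') (P - {S, S'})"
  have "zero_partitioning m n v P'"
    unfolding P'_def using assms(2) S(1) S'(1) by (rule zero_partitioning_merge)
  moreover have "w j = v j" if "j \<in> {1..m}" "j \<notin> D" for j
    using that unfolding D_def by simp
  moreover have "int n dvd (\<Sum>j\<in>D. w j - v j)"
    using assms(1) csr_vertex_diff_sum_dvd unfolding D_def csr_adj_def by blast
  moreover have "D \<subseteq> T \<or> T \<inter> D = {}" if "T \<in> P'" for T
  proof (cases "T = S \<union> S'")
    case False
    then have "T \<in> P" "T \<noteq> S" "T \<noteq> S'" using that unfolding P'_def by auto
    then have "T \<inter> S = {}" "T \<inter> S' = {}"
      using disjointD[OF partition_onD2[OF part]] S S' by blast+
    then show ?thesis using D S S' by blast
  qed (use D S S' in blast)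
  ultimately have "zero_partitioning m n w P'" by (rule zero_partitioning_change)
  moreover have "card P \<le> Suc (card P')"
    unfolding P'_def using card_partition_merge[OF part _ S(1) S'(1)] finite_elements[OF _ part]
    by simp
  ultimately show ?thesis by blast
qed

lemma csr_connected_by_0:
  "csr_connected_by m n u v 0 \<longleftrightarrow> csr_vertex m n u \<and> v = u"
  by (auto simp: csr_connected_by_def csr_walk_def)

lemma csr_connected_by_Suc:
  "csr_connected_by m n u w (Suc k) \<longleftrightarrow> (\<exists>v. csr_connected_by m n u v k \<and> csr_adj m n v w)"
proof
  assume "csr_connected_by m n u w (Suc k)"
  then obtain p where "csr_walk m n p (Suc k)" "p 0 = u" "p (Suc k) = w"
    by (auto simp: csr_connected_by_def)
  then show "\<exists>v. csr_connected_by m n u v k \<and> csr_adj m n v w"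
    by (auto simp: csr_connected_by_def csr_walk_def intro!: exI[of _ "p k"])
next
  assume "\<exists>v. csr_connected_by m n u v k \<and> csr_adj m n v w"
  then obtain v p where "csr_walk m n p k" "p 0 = u" "p k = v" "csr_adj m n v w"
    by (auto simp: csr_connected_by_def)
  then have "csr_walk m n (p(Suc k := w)) (Suc k)" "(p(Suc k := w)) 0 = u"
    by (auto simp: csr_walk_def less_Suc_eq)
  then show "csr_connected_by m n u w (Suc k)"
    by (auto simp: csr_connected_by_def)
qed

lemma zero_partitioning_of_connected:
  assumes "csr_connected_by m n (\<lambda>_. 0) b k"
  shows "\<exists>P. zero_partitioning m n b P \<and> m \<le> card P + k"
  using assms
proof (induction k arbitrary: b)
  case 0
  then have "b = (\<lambda>_. 0)" by (simp add: csr_connected_by_0)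
  then have "zero_partitioning m n b ((\<lambda>j. {j}) ` {1..m})"
    by (simp add: zero_partitioning_def partition_on_singletons)
  moreover have "card ((\<lambda>j. {j}) ` {1..m}) = m" by (simp add: card_image)
  ultimately show ?case by auto
next
  case (Suc k)
  then obtain v where v: "csr_connected_by m n (\<lambda>_. 0) v k" "csr_adj m n v b"
    by (auto simp: csr_connected_by_Suc)
  obtain P where "zero_partitioning m n v P" "m \<le> card P + k"
    using Suc.IH[OF v(1)] by blast
  moreover obtain P' where "zero_partitioning m n b P'" "card P \<le> Suc (card P')"
    using zero_partitioning_adj[OF v(2) \<open>zero_partitioning m n v P\<close>] by blast
  ultimately show ?case by auto
qed

definition move_entry :: "nat \<Rightarrow> (nat \<Rightarrow> int) \<Rightarrow> nat \<Rightarrow> nat \<Rightarrow> nat \<Rightarrow> int" where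
  "move_entry n b i i' = b(i := 0, i' := (b i' + b i) mod int n)"

lemma move_entry_apply:
  assumes "i \<noteq> i'"
  shows "move_entry n b i i' i = 0" "move_entry n b i i' i' = (b i' + b i) mod int n"
    "j \<noteq> i \<Longrightarrow> j \<noteq> i' \<Longrightarrow> move_entry n b i i' j = b j"
  using assms by (auto simp: move_entry_def)

lemma sum_move_entry_dvd_iff:
  assumes "finite A" "i \<in> A" "i' \<in> A" "i \<noteq> i'"
  shows "int n dvd (\<Sum>j\<in>A. move_entry n b i i' j) \<longleftrightarrow> int n dvd (\<Sum>j\<in>A. b j)"
proof -
  have "sum (b(i := 0)) A = sum b A - b i"
    using sum_fun_upd[OF assms(1,2), of b 0] by (simp del: fun_upd_apply)
  moreover have "sum (move_entry n b i i') A = sum (b(i := 0)) A - b i' + (b i' + b i) mod int n"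
    using sum_fun_upd[OF assms(1,3), of "b(i := 0)"] assms(4)
    unfolding move_entry_def by (simp add: fun_upd_other del: fun_upd_apply)
  ultimately have "(\<Sum>j\<in>A. move_entry n b i i' j) = (\<Sum>j\<in>A. b j) - b i - b i' + (b i' + b i) mod int n"
    by simp
  then have "(\<Sum>j\<in>A. move_entry n b i i' j) mod int n = (\<Sum>j\<in>A. b j) mod int n"
    by (simp add: mod_add_right_eq)
  then show ?thesis by (simp add: dvd_eq_mod_eq_0)
qed

lemma csr_vertex_move_entry:
  assumes "0 < n" "csr_vertex m n b" "i \<in> {1..m}" "i' \<in> {1..m}" "i \<noteq> i'"
  shows "csr_vertex m n (move_entry n b i i')"
  unfolding csr_vertex_def
proof (intro conjI ballI allI impI)
  fix j assume "j \<in> {1..m}"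
  then have "0 \<le> b j \<and> b j < int n" using assms(2) by (simp add: csr_vertex_def)
  moreover have "0 \<le> (b i' + b i) mod int n \<and> (b i' + b i) mod int n < int n"
    using assms(1) by simp
  ultimately have "0 \<le> move_entry n b i i' j \<and> move_entry n b i i' j < int n"
    using move_entry_apply[OF assms(5), where n = n and b = b]
    by (cases "j = i'"; cases "j = i") simp_all
  then show "0 \<le> move_entry n b i i' j" "move_entry n b i i' j < int n" by simp_all
next
  fix j assume j: "j \<notin> {1..m}"
  then have "j \<noteq> i" "j \<noteq> i'" using assms(3,4) by auto
  then show "move_entry n b i i' j = 0"
    using move_entry_apply(3)[OF assms(5)] assms(2) j by (simp add: csr_vertex_def)
next
  have "int n dvd (\<Sum>j\<in>{1..m}. move_entry n b i i' j)"
    using sum_move_entry_dvd_iff[OF finite_atLeastAtMost assms(3-5)] csr_vertex_sum_dvd[OF assms(2)]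
    by blast
  then show "(\<Sum>j\<in>{1..m}. move_entry n b i i' j) mod int n = 0"
    unfolding dvd_eq_mod_eq_0 .
qed

lemma csr_adj_move_entry:
  assumes "0 < n" "csr_vertex m n b" "i \<in> {1..m}" "i' \<in> {1..m}" "i \<noteq> i'" "b i \<noteq> 0"
  shows "csr_adj m n (move_entry n b i i') b"
proof -
  have "0 < b i" "b i < int n" "0 \<le> b i'" "b i' < int n"
    using assms unfolding csr_vertex_def by force+
  then have "(b i' + b i) mod int n \<noteq> b i'"
    by (intro mod_add_ne_self) (auto simp: zdvd_not_zless)
  then have "{j\<in>{1..m}. move_entry n b i i' j \<noteq> b j} = {i, i'}"
    using assms(3-6) move_entry_apply[OF assms(5), where n = n and b = b] by auto
  then show ?thesis
    using assms csr_vertex_move_entry unfolding csr_adj_def by simp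
qed

lemma zero_partitioning_move_entry:
  assumes "zero_partitioning m n b P" "S \<in> P" "i \<in> S" "i' \<in> S" "i \<noteq> i'"
  shows "zero_partitioning m n (move_entry n b i i') (insert {i} (insert (S - {i}) (P - {S})))"
  unfolding zero_partitioning_iff
proof (intro conjI ballI)
  have part: "partition_on {1..m} P" using assms(1) by (simp add: zero_partitioning_def)
  have "S \<noteq> {i}" using assms(4,5) by blast
  then show "partition_on {1..m} (insert {i} (insert (S - {i}) (P - {S})))"
    by (rule partition_on_split_off[OF part assms(2,3)])
  fix T assume T: "T \<in> insert {i} (insert (S - {i}) (P - {S}))"
  have finS: "finite S" using zero_partitioning_partD(2)[OF assms(1,2)] .
  consider "T = {i}" | "T = S - {i}" | "T \<in> P" "T \<noteq> S" using T by blast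
  then show "int n dvd (\<Sum>j\<in>T. move_entry n b i i' j)"
  proof cases
    case 1
    then show ?thesis using move_entry_apply(1)[OF assms(5)] by simp
  next
    case 2
    have "(\<Sum>j\<in>S. move_entry n b i i' j) = (\<Sum>j\<in>S - {i}. move_entry n b i i' j)"
      using sum.remove[OF finS assms(3), of "move_entry n b i i'"] move_entry_apply(1)[OF assms(5)]
      by simp
    then show ?thesis
      using 2 sum_move_entry_dvd_iff[OF finS assms(3-5), where n = n and b = b]
        zero_partitioning_partD(3)[OF assms(1,2)]
      by simp
  next
    case 3
    then have "T \<inter> S = {}" using disjointD[OF partition_onD2[OF part] _ assms(2)] by blast
    then have "j \<noteq> i" "j \<noteq> i'" if "j \<in> T" for j using that assms(3,4) by blast+
    then have "(\<Sum>j\<in>T. move_entry n b i i' j) = (\<Sum>j\<in>T. b j)"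
      by (intro sum.cong) (simp_all add: move_entry_apply(3)[OF assms(5)])
    then show ?thesis using zero_partitioning_partD(3)[OF assms(1) 3(1)] by simp
  qed
qed

lemma move_entry_support_psubset:
  assumes "i \<in> {1..m}" "i \<noteq> i'" "b i \<noteq> 0" "b i' \<noteq> 0"
  shows "{j\<in>{1..m}. move_entry n b i i' j \<noteq> 0} \<subset> {j\<in>{1..m}. b j \<noteq> 0}"
proof
  have "b j \<noteq> 0" if "move_entry n b i i' j \<noteq> 0" for j
    using that assms(4) move_entry_apply[OF assms(2), where n = n and b = b]
    by (cases "j = i"; cases "j = i'") simp_all
  then show "{j\<in>{1..m}. move_entry n b i i' j \<noteq> 0} \<subseteq> {j\<in>{1..m}. b j \<noteq> 0}"
    by blast
  show "{j\<in>{1..m}. move_entry n b i i' j \<noteq> 0} \<noteq> {j\<in>{1..m}. b j \<noteq> 0}"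
    using assms(1,3) move_entry_apply(1)[OF assms(2), where n = n and b = b] by blast
qed

lemma exists_adj_finer_zero_partitioning:
  assumes "0 < n" "csr_vertex m n b" "zero_partitioning m n b P" "i \<in> {1..m}" "b i \<noteq> 0"
  shows "\<exists>b' P'. csr_adj m n b' b \<and> zero_partitioning m n b' P' \<and> card P' = Suc (card P) \<and>
           {j\<in>{1..m}. b' j \<noteq> 0} \<subset> {j\<in>{1..m}. b j \<noteq> 0}"
proof -
  have part: "partition_on {1..m} P" using assms(3) by (simp add: zero_partitioning_def)
  have "0 < b i" "b i < int n" using assms(2,4,5) unfolding csr_vertex_def by force+
  then have "\<not> int n dvd b i" by (simp add: zdvd_not_zless)
  obtain S where S: "S \<in> P" "i \<in> S" using assms(4) partition_onD1[OF part] by blast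
  obtain i' where i': "i' \<in> S" "i' \<noteq> i" "b i' \<noteq> 0"
    using exists_other_nonzero zero_partitioning_partD[OF assms(3) S(1)] S(2)
      \<open>\<not> int n dvd b i\<close> by metis
  have "i' \<in> {1..m}" using zero_partitioning_partD(1)[OF assms(3) S(1)] i'(1) by blast
  have "csr_adj m n (move_entry n b i i') b"
    using assms(1,2,4,5) \<open>i' \<in> {1..m}\<close> i'(2) by (intro csr_adj_move_entry) auto
  moreover have "zero_partitioning m n (move_entry n b i i') (insert {i} (insert (S - {i}) (P - {S})))"
    using assms(3) S i'(1,2) by (intro zero_partitioning_move_entry) auto
  moreover have "card (insert {i} (insert (S - {i}) (P - {S}))) = Suc (card P)"
    using part finite_elements[OF _ part] S i'(1,2) by (intro card_partition_split_off) auto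
  moreover have "{j\<in>{1..m}. move_entry n b i i' j \<noteq> 0} \<subset> {j\<in>{1..m}. b j \<noteq> 0}"
    using assms(4,5) i'(2,3) by (intro move_entry_support_psubset) auto
  ultimately show ?thesis by blast
qed

lemma connected_of_zero_partitioning:
  assumes "0 < n" "csr_vertex m n b" "zero_partitioning m n b P"
  shows "\<exists>k. csr_connected_by m n (\<lambda>_. 0) b k \<and> k + card P \<le> m"
  using assms(2,3)
proof (induction "card {j\<in>{1..m}. b j \<noteq> 0}" arbitrary: b P rule: less_induct)
  case less
  show ?case
  proof (cases "\<exists>i\<in>{1..m}. b i \<noteq> 0")
    case False
    then have "b = (\<lambda>_. 0)" using less.prems(1) unfolding csr_vertex_def by fastforce
    then have "csr_connected_by m n (\<lambda>_. 0) b 0"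
      using less.prems(1) by (simp add: csr_connected_by_0)
    then show ?thesis using zero_partitioning_card_le[OF less.prems(2)] by auto
  next
    case True
    then obtain b' P' where b': "csr_adj m n b' b" "zero_partitioning m n b' P'"
        "card P' = Suc (card P)" "{j\<in>{1..m}. b' j \<noteq> 0} \<subset> {j\<in>{1..m}. b j \<noteq> 0}"
      using exists_adj_finer_zero_partitioning[OF assms(1) less.prems] by blast
    moreover have "csr_vertex m n b'" using b'(1) by (simp add: csr_adj_def)
    moreover have "card {j\<in>{1..m}. b' j \<noteq> 0} < card {j\<in>{1..m}. b j \<noteq> 0}"
      using b'(4) by (simp add: psubset_card_mono)
    ultimately obtain k where "csr_connected_by m n (\<lambda>_. 0) b' k" "k + card P' \<le> m"
      using less.hyps by blast
    then show ?thesis using b'(1,3)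
      by (intro exI[of _ "Suc k"]) (auto simp: csr_connected_by_Suc)
  qed
qed

lemma finite_zero_partitioning_cards:
  "finite {t. \<exists>P. zero_partitioning m n b P \<and> card P = t}"
  by (rule finite_subset[of _ "{..m}"]) (auto dest: zero_partitioning_card_le)

lemma zero_partitioning_card_le_tau:
  "zero_partitioning m n b P \<Longrightarrow> card P \<le> tau m n b"
  unfolding tau_def by (rule Max_ge[OF finite_zero_partitioning_cards]) blast

lemma tau_attained:
  assumes "0 < m" "csr_vertex m n b"
  shows "\<exists>P. zero_partitioning m n b P \<and> card P = tau m n b"
proof -
  have "zero_partitioning m n b {{1..m}}"
    using assms unfolding zero_partitioning_def csr_vertex_def by (simp add: partition_on_space)
  then have "{t. \<exists>P. zero_partitioning m n b P \<and> card P = t} \<noteq> {}" by blast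
  from Max_in[OF finite_zero_partitioning_cards this] show ?thesis
    unfolding tau_def by blast
qed

theorem lemma1:
  fixes m n :: nat and b :: "nat \<Rightarrow> int"
  assumes "0 < m" and "0 < n"
    and "csr_vertex m n b"
  shows "(\<exists>k. csr_connected_by m n (\<lambda>_. 0) b k) \<and>
         csr_dist m n (\<lambda>_. 0) b = m - tau m n b"
proof -
  obtain P where P: "zero_partitioning m n b P" "card P = tau m n b"
    using tau_attained[OF assms(1,3)] by blast
  then obtain k where k: "csr_connected_by m n (\<lambda>_. 0) b k" "k + tau m n b \<le> m"
    using connected_of_zero_partitioning[OF assms(2,3)] by metis
  have "csr_dist m n (\<lambda>_. 0) b \<le> k"
    unfolding csr_dist_def using k(1) by (rule Least_le)
  moreover have "csr_connected_by m n (\<lambda>_. 0) b (csr_dist m n (\<lambda>_. 0) b)"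
    unfolding csr_dist_def using k(1) by (rule LeastI)
  then obtain Q where "zero_partitioning m n b Q" "m \<le> card Q + csr_dist m n (\<lambda>_. 0) b"
    using zero_partitioning_of_connected by blast
  then have "m \<le> tau m n b + csr_dist m n (\<lambda>_. 0) b"
    using zero_partitioning_card_le_tau by fastforce
  ultimately show ?thesis using k by auto
qed

end
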